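(* Let $G$ be a group. (i) If $H \leqslant M \leqslant G$, $M$ is exponential in $G$ and $H$ is exponential in $M$, then $H$ is exponential in $G$. (ii) If $H$ and $K$ are exponential subgroups of $G$, then $H \cap K$ is exponential in $G$.
   Context: A subgroup $H$ of finite index in a group $G$ is called exponential in $G$ if $x^{|G:H|} \in H$ for every $x \in G$. *)

theory Defs
  imports "HOL-Algebra.Algebra"
begin

definition exponential :: "('a, 'b) monoid_scheme \<Rightarrow> 'a set \<Rightarrow> bool" where
  "exponential G H \<longleftrightarrow>
     subgroup H G \<and> finite (rcosets\<^bsub>G\<^esub> H) \<and>
     (\<forall>x \<in> carrier G. x [^]\<^bsub>G\<^esub> card (rcosets\<^bsub>G\<^esub> H) \<in> H)"

end

theory Submission
  imports Defs
begin

text \<open>Right translation by \<open>a\<close> maps the right cosets of \<open>H\<close> in \<open>M\<close> bijectively onto the right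
  cosets of \<open>H\<close> contained in \<open>M a\<close>, so the index is multiplicative: \<open>|G:H| = |G:M| |M:H|\<close>. Hence
  \<open>x\<^bsup>|G:H|\<^esup> = (x\<^bsup>|G:M|\<^esup>)\<^bsup>|M:H|\<^esup>\<close> lies in \<open>H\<close> as soon as \<open>x\<^bsup>|G:M|\<^esup> \<in> M\<close> and \<open>H\<close> is exponential in \<open>M\<close>.
  For intersections, \<open>(H \<inter> K) x = H x \<inter> K x\<close> shows that \<open>H \<inter> K\<close> has finite index, and by
  multiplicativity this index is a multiple of both \<open>|G:H|\<close> and \<open>|G:K|\<close>.\<close>

context group
begin

lemma subgroup_nat_pow_closed:
  assumes "subgroup H G" "h \<in> H"
  shows "h [^] (n::nat) \<in> H"
  using subgroup_int_pow_closed[OF assms, of "int n"] by (simp add: int_pow_int)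

lemma rcosets_subgroup_carrier: "rcosets\<^bsub>G\<lparr>carrier := M\<rparr>\<^esub> H = (\<lambda>m. H #> m) ` M"
  by (auto simp: RCOSETS_def r_coset_def)

lemma rcosets_subgroup_subset:
  assumes "H \<subseteq> carrier G" "M \<subseteq> carrier G"
  shows "rcosets\<^bsub>G\<lparr>carrier := M\<rparr>\<^esub> H \<subseteq> rcosets H"
  using assms by (auto simp: rcosets_subgroup_carrier intro: rcosetsI)

lemma rcoset_Int:
  assumes "H \<subseteq> carrier G" "K \<subseteq> carrier G" "x \<in> carrier G"
  shows "(H \<inter> K) #> x = (H #> x) \<inter> (K #> x)"
proof -
  have "h = k" if "h \<in> H" "k \<in> K" "h \<otimes> x = k \<otimes> x" for h k
    using that assms right_cancel by blast
  then show ?thesis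
    by (auto simp: r_coset_def)
qed

lemma finite_rcosets_Int:
  assumes "subgroup H G" "subgroup K G" "finite (rcosets H)" "finite (rcosets K)"
  shows "finite (rcosets (H \<inter> K))"
proof -
  have "rcosets (H \<inter> K) \<subseteq> (\<lambda>(A, B). A \<inter> B) ` ((rcosets H) \<times> (rcosets K))"
  proof
    fix Y assume "Y \<in> rcosets (H \<inter> K)"
    then obtain x where x: "x \<in> carrier G" "Y = (H \<inter> K) #> x"
      by (auto simp: RCOSETS_def)
    then have "Y = (\<lambda>(A, B). A \<inter> B) (H #> x, K #> x)"
      using assms(1,2) by (simp add: rcoset_Int subgroup.subset)
    moreover have "(H #> x, K #> x) \<in> (rcosets H) \<times> (rcosets K)"
      using x assms(1,2) by (simp add: rcosetsI subgroup.subset)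
    ultimately show "Y \<in> (\<lambda>(A, B). A \<inter> B) ` ((rcosets H) \<times> (rcosets K))"
      by (rule image_eqI)
  qed
  then show ?thesis
    using assms(3,4) by (meson finite_SigmaI finite_imageI finite_subset)
qed

lemma bij_betw_rcosets_rcoset:
  assumes "H \<subseteq> M" "M \<subseteq> carrier G" "a \<in> carrier G"
  shows "bij_betw (\<lambda>Y. Y #> a) (rcosets\<^bsub>G\<lparr>carrier := M\<rparr>\<^esub> H) {H #> x | x. x \<in> M #> a}"
proof (rule bij_betw_imageI)
  have Hc: "H \<subseteq> carrier G"
    using assms(1,2) by blast
  have "Y #> a #> inv a = Y" if Y: "Y \<in> rcosets\<^bsub>G\<lparr>carrier := M\<rparr>\<^esub> H" for Y
  proof -
    obtain m where "m \<in> M" "Y = H #> m"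
      using Y by (auto simp: rcosets_subgroup_carrier)
    then have "Y \<subseteq> carrier G"
      using assms(2) Hc r_coset_subset_G by blast
    then show ?thesis
      using assms(3) by (simp add: coset_mult_assoc)
  qed
  then show "inj_on (\<lambda>Y. Y #> a) (rcosets\<^bsub>G\<lparr>carrier := M\<rparr>\<^esub> H)"
    by (rule inj_on_inverseI)
  have shift: "H #> m #> a = H #> (m \<otimes> a)" if "m \<in> M" for m
    using that assms(2,3) coset_mult_assoc[OF Hc] by blast
  show "(\<lambda>Y. Y #> a) ` (rcosets\<^bsub>G\<lparr>carrier := M\<rparr>\<^esub> H) = {H #> x | x. x \<in> M #> a}"
  proof (intro equalityI subsetI)
    fix Z assume "Z \<in> (\<lambda>Y. Y #> a) ` (rcosets\<^bsub>G\<lparr>carrier := M\<rparr>\<^esub> H)"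
    then obtain m where "m \<in> M" "Z = H #> (m \<otimes> a)"
      by (auto simp: rcosets_subgroup_carrier shift)
    then show "Z \<in> {H #> x | x. x \<in> M #> a}"
      using assms(2,3) rcosI by blast
  next
    fix Z assume "Z \<in> {H #> x | x. x \<in> M #> a}"
    then obtain m where "m \<in> M" "Z = H #> (m \<otimes> a)"
      by (auto simp: r_coset_def)
    then show "Z \<in> (\<lambda>Y. Y #> a) ` (rcosets\<^bsub>G\<lparr>carrier := M\<rparr>\<^esub> H)"
      unfolding rcosets_subgroup_carrier image_image using shift by blast
  qed
qed

lemma rcosets_eq_UN_rcosets:
  assumes "subgroup H G" "subgroup M G" "H \<subseteq> M"
  shows "rcosets H = (\<Union>C \<in> rcosets M. {H #> x | x. x \<in> C})"
proof (intro equalityI subsetI)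
  fix Y assume "Y \<in> rcosets H"
  then obtain x where x: "x \<in> carrier G" and Y: "Y = H #> x"
    by (auto simp: RCOSETS_def)
  have "M #> x \<in> rcosets M"
    using x assms(2) by (simp add: rcosetsI subgroup.subset)
  moreover have "x \<in> M #> x"
    using x assms(2) by (rule rcos_self)
  ultimately show "Y \<in> (\<Union>C \<in> rcosets M. {H #> x | x. x \<in> C})"
    unfolding Y by blast
next
  fix Y assume "Y \<in> (\<Union>C \<in> rcosets M. {H #> x | x. x \<in> C})"
  then obtain C x where "C \<in> rcosets M" "x \<in> C" and Y: "Y = H #> x"
    by blast
  then have "x \<in> carrier G"
    using subgroup.rcosets_carrier[OF assms(2) is_group] by blast
  then show "Y \<in> rcosets H"
    unfolding Y using assms(1) by (simp add: rcosetsI subgroup.subset)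
qed

lemma disjoint_family_on_rcosets_in_rcosets:
  assumes "subgroup H G" "subgroup M G" "H \<subseteq> M"
  shows "disjoint_family_on (\<lambda>C. {H #> x | x. x \<in> C}) (rcosets M)"
unfolding disjoint_family_on_def
proof (intro ballI impI)
  fix C C' assume C: "C \<in> rcosets M" and C': "C' \<in> rcosets M" and "C \<noteq> C'"
  then have disj: "C \<inter> C' = {}"
    using rcos_disjoint[OF assms(2)] by (auto simp: pairwise_def disjnt_def)
  show "{H #> x | x. x \<in> C} \<inter> {H #> x | x. x \<in> C'} = {}"
  proof (rule ccontr)
    assume "\<not> ?thesis"
    then obtain x y where xy: "x \<in> C" "y \<in> C'" "H #> x = H #> y"
      by blast
    have "x \<in> carrier G" "y \<in> carrier G"
      using xy C C' subgroup.rcosets_carrier[OF assms(2) is_group] by auto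
    then have "x \<in> H #> y"
      using xy(3) assms(1) rcos_self by metis
    also have "H #> y \<subseteq> M #> y"
      using assms(3) by (auto simp: r_coset_def)
    also have "M #> y = C'"
      using C' xy(2) assms(2) by (auto simp: RCOSETS_def dest: repr_independence)
    finally show False
      using xy(1) disj by blast
  qed
qed

theorem rcosets_tower:
  assumes "subgroup H G" "subgroup M G" "H \<subseteq> M"
    and "finite (rcosets M)" "finite (rcosets\<^bsub>G\<lparr>carrier := M\<rparr>\<^esub> H)"
  shows "finite (rcosets H)"
    and "card (rcosets H) = card (rcosets M) * card (rcosets\<^bsub>G\<lparr>carrier := M\<rparr>\<^esub> H)"
proof -
  have block: "finite {H #> x | x. x \<in> C} \<and>
      card {H #> x | x. x \<in> C} = card (rcosets\<^bsub>G\<lparr>carrier := M\<rparr>\<^esub> H)"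
    if "C \<in> rcosets M" for C
  proof -
    obtain a where a: "a \<in> carrier G" and C: "C = M #> a"
      using \<open>C \<in> rcosets M\<close> by (auto simp: RCOSETS_def)
    have "bij_betw (\<lambda>Y. Y #> a) (rcosets\<^bsub>G\<lparr>carrier := M\<rparr>\<^esub> H) {H #> x | x. x \<in> C}"
      unfolding C using bij_betw_rcosets_rcoset[OF assms(3) subgroup.subset[OF assms(2)] a] .
    with assms(5) show ?thesis
      by (simp add: bij_betw_finite bij_betw_same_card)
  qed
  show "finite (rcosets H)"
    unfolding rcosets_eq_UN_rcosets[OF assms(1-3)]
    using assms(4) block by (intro finite_UN_I) auto
  have "card (rcosets H) = (\<Sum>C \<in> rcosets M. card {H #> x | x. x \<in> C})"
    unfolding rcosets_eq_UN_rcosets[OF assms(1-3)]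
    using block
    by (intro card_UN_disjoint'[OF disjoint_family_on_rcosets_in_rcosets[OF assms(1-3)] _ assms(4)])
      auto
  also have "\<dots> = (\<Sum>C \<in> rcosets M. card (rcosets\<^bsub>G\<lparr>carrier := M\<rparr>\<^esub> H))"
    using block by (intro sum.cong) auto
  finally show "card (rcosets H) = card (rcosets M) * card (rcosets\<^bsub>G\<lparr>carrier := M\<rparr>\<^esub> H)"
    by simp
qed

lemma card_rcosets_dvd:
  assumes "subgroup N G" "subgroup H G" "N \<subseteq> H" "finite (rcosets H)" "finite (rcosets N)"
  shows "card (rcosets H) dvd card (rcosets N)"
proof -
  have "finite (rcosets\<^bsub>G\<lparr>carrier := H\<rparr>\<^esub> N)"
    using assms(1,2,5) rcosets_subgroup_subset finite_subset subgroup.subset by metis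
  then show ?thesis
    using rcosets_tower(2)[OF assms(1-4)] by simp
qed

lemma exponential_pow_dvd:
  assumes "exponential G H" "card (rcosets H) dvd n" "x \<in> carrier G"
  shows "x [^] n \<in> H"
proof -
  obtain k where "n = card (rcosets H) * k"
    using assms(2) by blast
  then have "x [^] n = (x [^] card (rcosets H)) [^] k"
    using assms(3) by (simp add: nat_pow_pow)
  then show ?thesis
    using assms(1,3) subgroup_nat_pow_closed by (simp add: exponential_def)
qed

lemma exponential_trans:
  assumes "exponential G M" "exponential (G\<lparr>carrier := M\<rparr>) H"
  shows "exponential G H"
proof -
  have M: "subgroup M G" and H': "subgroup H (G\<lparr>carrier := M\<rparr>)"
    using assms by (simp_all add: exponential_def)
  have H: "subgroup H G" and HM: "H \<subseteq> M"
    using incl_subgroup[OF M H'] subgroup.subset[OF H'] by simp_all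
  have fin_M: "finite (rcosets M)" and fin_MH: "finite (rcosets\<^bsub>G\<lparr>carrier := M\<rparr>\<^esub> H)"
    using assms by (simp_all add: exponential_def)
  note tower = rcosets_tower[OF H M HM fin_M fin_MH]
  have "x [^] card (rcosets H) \<in> H" if x: "x \<in> carrier G" for x
  proof -
    have "x [^] card (rcosets M) \<in> M"
      using assms(1) x by (simp add: exponential_def)
    moreover have "x [^] card (rcosets H) =
        (x [^] card (rcosets M)) [^]\<^bsub>G\<lparr>carrier := M\<rparr>\<^esub> card (rcosets\<^bsub>G\<lparr>carrier := M\<rparr>\<^esub> H)"
      using x by (simp add: tower(2) nat_pow_pow flip: nat_pow_consistent)
    ultimately show ?thesis
      using assms(2) by (simp add: exponential_def)
  qed
  with H tower(1) show ?thesis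
    by (simp add: exponential_def)
qed

lemma exponential_Int:
  assumes "exponential G H" "exponential G K"
  shows "exponential G (H \<inter> K)"
proof -
  have H: "subgroup H G" "finite (rcosets H)" and K: "subgroup K G" "finite (rcosets K)"
    using assms by (simp_all add: exponential_def)
  have HK: "subgroup (H \<inter> K) G"
    using subgroups_Inter_pair[OF H(1) K(1)] .
  have fin: "finite (rcosets (H \<inter> K))"
    using finite_rcosets_Int[OF H(1) K(1) H(2) K(2)] .
  have "x [^] card (rcosets (H \<inter> K)) \<in> H \<inter> K" if "x \<in> carrier G" for x
    using exponential_pow_dvd[OF assms(1) card_rcosets_dvd[OF HK H(1) _ H(2) fin] that]
      exponential_pow_dvd[OF assms(2) card_rcosets_dvd[OF HK K(1) _ K(2) fin] that]
    by blast
  with HK fin show ?thesis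
    by (simp add: exponential_def)
qed

end

theorem lemma4p6:
  fixes G :: "('a, 'b) monoid_scheme"
  assumes "group G"
  shows "(\<forall>H M. H \<subseteq> M \<and> subgroup M G \<and> exponential G M \<and>
                  exponential (G\<lparr>carrier := M\<rparr>) H \<longrightarrow> exponential G H)
       \<and> (\<forall>H K. exponential G H \<and> exponential G K \<longrightarrow> exponential G (H \<inter> K))"
  using group.exponential_trans[OF assms] group.exponential_Int[OF assms] by blast

end
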